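(* Let $n\ge4$ and let $I\subseteq\mathbb K[x_1,\dots,x_n]$ be a good ideal. Then $I^k$ is a bad ideal for every integer $k\ge2$.
   Context: Let $\mathbb K$ be a field, $R=\mathbb K[x_1,\dots,x_n]$, $\mathfrak m=\langle x_1,\dots,x_n\rangle$, $\mathbb N=\{0,1,2,\dots\}$. A monomial $x_1^{\alpha_1}\cdots x_n^{\alpha_n}$ is identified with the point $(\alpha_1,\dots,\alpha_n)\in\mathbb N^n$. For a monomial ideal $I$, $G(I)$ denotes its (unique) minimal monomial generating set. If $I$ is an $\mathfrak m$-primary monomial ideal, then for each $i$ there is a unique $d_i\ge1$ with $x_i^{d_i}\in G(I)$; write $\mu_i=x_i^{d_i}$. For $(a_1,\dots,a_n)\in\mathbb N^n$ the box associated to $I$ is $B_{a_1,\dots,a_n}=([a_1d_1,(a_1+1)d_1]\times\cdots\times[a_nd_n,(a_n+1)d_n])\cap\mathbb N^n$; a monomial belongs to a box if its exponent vector does. An $\mathfrak m$-primary monomial ideal $I$ is called good if for every integer $l\ge1$, every element of $G(I^l)$ belongs to some box $B_{a_1,\dots,a_n}$ with $a_1+\dots+a_n=l-1$; otherwise bad. (Goodness of $I^k$ is defined with respect to its own pure powers $x_i^{kd_i}\in G(I^k)$.) *)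

theory Defs
  imports Main
begin

text \<open>Monomials of K[x_i | i :: 'n] are identified with exponent vectors 'n \<Rightarrow> nat
  (the finite type 'n indexes the variables, n = CARD('n)).  A monomial ideal I is
  identified with the set of exponent vectors of the monomials it contains; this set is
  an upward closed subset of N^n, and conversely every such set determines a unique
  monomial ideal.  The field K plays no role in the combinatorics.\<close>

type_synonym 'n expvec = "'n \<Rightarrow> nat"

definition monomial_ideal :: "'n expvec set \<Rightarrow> bool" where
  "monomial_ideal E \<longleftrightarrow> (\<forall>a\<in>E. \<forall>b. a \<le> b \<longrightarrow> b \<in> E)"

definition pure :: "'n \<Rightarrow> nat \<Rightarrow> 'n expvec" where
  "pure i d = (\<lambda>j. if j = i then d else 0)"

definition m_primary :: "'n expvec set \<Rightarrow> bool" where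
  "m_primary E \<longleftrightarrow> monomial_ideal E \<and> (\<lambda>_. 0) \<notin> E \<and> (\<forall>i. \<exists>d. pure i d \<in> E)"

definition pdeg :: "'n expvec set \<Rightarrow> 'n \<Rightarrow> nat" where
  "pdeg E i = (LEAST d. pure i d \<in> E)"

definition gens :: "'n expvec set \<Rightarrow> 'n expvec set" where
  "gens E = {a \<in> E. \<forall>b\<in>E. b \<le> a \<longrightarrow> b = a}"

definition mprod :: "'n expvec set \<Rightarrow> 'n expvec set \<Rightarrow> 'n expvec set" where
  "mprod E F = {(\<lambda>i. a i + b i) | a b. a \<in> E \<and> b \<in> F}"

fun mpow :: "'n expvec set \<Rightarrow> nat \<Rightarrow> 'n expvec set" where
  "mpow E 0 = UNIV"
| "mpow E (Suc l) = mprod E (mpow E l)"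

definition in_box :: "'n expvec set \<Rightarrow> 'n expvec \<Rightarrow> 'n expvec \<Rightarrow> bool" where
  "in_box E a \<alpha> \<longleftrightarrow> (\<forall>i. a i * pdeg E i \<le> \<alpha> i \<and> \<alpha> i \<le> (a i + 1) * pdeg E i)"

definition good :: "('n::finite) expvec set \<Rightarrow> bool" where
  "good E \<longleftrightarrow> m_primary E \<and>
     (\<forall>l\<ge>1. \<forall>\<alpha>\<in>gens (mpow E l). \<exists>a. (\<Sum>i\<in>UNIV. a i) = l - 1 \<and> in_box E a \<alpha>)"

definition bad :: "('n::finite) expvec set \<Rightarrow> bool" where
  "bad E \<longleftrightarrow> m_primary E \<and> \<not> good E"

end

theory Submission
  imports Defs Complex_Main
begin

text \<open>Measure a monomial by its weight \<open>\<Sum>\<^sub>i \<alpha>\<^sub>i / d\<^sub>i\<close>. The box condition for high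
  powers forces every monomial of a good ideal \<open>I\<close> to have weight at least 1, so every monomial
  of \<open>I\<^sup>k\<close> has weight at least \<open>k\<close> and the pure powers of \<open>I\<^sup>k\<close> are \<open>x\<^sub>i\<^bsup>k d\<^sub>i\<^esup>\<close>. With four
  distinct variables, \<open>A = x\<^sub>1\<^bsup>(k-1)d\<^sub>1\<^esup> x\<^sub>2\<^bsup>(k-1)d\<^sub>2\<^esup> x\<^sub>3\<^bsup>d\<^sub>3\<^esup> x\<^sub>4\<^bsup>d\<^sub>4\<^esup>\<close> is a product of two
  monomials of \<open>I\<^sup>k\<close> of weight exactly \<open>2k\<close>, hence a minimal generator of \<open>(I\<^sup>k)\<^sup>2\<close>. But every
  exponent of \<open>A\<close> is below the corresponding pure power of \<open>I\<^sup>k\<close>, whereas a box with index sum 1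
  requires one exponent to reach it.\<close>

definition weight :: "('n::finite \<Rightarrow> nat) \<Rightarrow> 'n expvec \<Rightarrow> real" where
  "weight d a = (\<Sum>i\<in>UNIV. real (a i) / real (d i))"

lemma weight_add: "weight d (\<lambda>i. a i + b i) = weight d a + weight d b"
  unfolding weight_def by (simp add: add_divide_distrib sum.distrib)

lemma weight_scale: "weight d (\<lambda>i. m * a i) = real m * weight d a"
  unfolding weight_def by (simp add: sum_distrib_left)

lemma weight_nonneg: "0 \<le> weight d a"
  unfolding weight_def by (intro sum_nonneg) auto

lemma weight_pure: "weight d (pure i e) = real e / real (d i)"
proof -
  have "weight d (pure i e) = (\<Sum>j\<in>UNIV. if j = i then real e / real (d i) else 0)"
    unfolding weight_def by (intro sum.cong) (auto simp: pure_def)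
  then show ?thesis by simp
qed

lemma weight_mono: "b \<le> a \<Longrightarrow> weight d b \<le> weight d a"
  unfolding weight_def by (intro sum_mono divide_right_mono) (auto simp: le_fun_def)

lemma weight_strict_mono:
  assumes "\<forall>i. 0 < d i" and "b \<le> a" and "b \<noteq> a"
  shows "weight d b < weight d a"
proof -
  obtain j where "b j \<noteq> a j"
    using assms(3) by auto
  with assms(2) have "b j < a j"
    by (simp add: le_fun_def order_less_le)
  then have "real (b j) / real (d j) < real (a j) / real (d j)"
    using assms(1) by (simp add: divide_strict_right_mono)
  moreover have "real (b i) / real (d i) \<le> real (a i) / real (d i)" for i
    using assms(2) by (simp add: le_fun_def divide_right_mono)
  ultimately show ?thesis
    unfolding weight_def by (intro sum_strict_mono_ex1) auto
qed

lemma mprod_mem: "a \<in> E \<Longrightarrow> b \<in> F \<Longrightarrow> (\<lambda>i. a i + b i) \<in> mprod E F"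
  unfolding mprod_def by blast

lemma mpow_one_mem: "a \<in> E \<Longrightarrow> a \<in> mpow E 1"
  using mprod_mem[of a E "\<lambda>_. 0" UNIV] by simp

lemma monomial_ideal_mprod:
  assumes "monomial_ideal E"
  shows "monomial_ideal (mprod E F)"
  unfolding monomial_ideal_def
proof (intro ballI allI impI)
  fix c x assume "c \<in> mprod E F" and "c \<le> x"
  then obtain a b where ab: "a \<in> E" "b \<in> F" "c = (\<lambda>i. a i + b i)"
    unfolding mprod_def by blast
  have le: "a i + b i \<le> x i" for i
    using \<open>c \<le> x\<close> ab(3) by (simp add: le_fun_def)
  then have "b i \<le> x i" for i
    using add_leD2 by blast
  then have "a \<le> (\<lambda>i. x i - b i)" and "x = (\<lambda>i. (x i - b i) + b i)"
    using le by (simp_all add: le_fun_def le_diff_conv2 fun_eq_iff)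
  moreover have "(\<lambda>i. x i - b i) \<in> E"
    using assms ab(1) \<open>a \<le> _\<close> unfolding monomial_ideal_def by blast
  ultimately show "x \<in> mprod E F"
    using mprod_mem[of "\<lambda>i. x i - b i" E b F] ab(2) by simp
qed

lemma monomial_ideal_mpow:
  assumes "monomial_ideal E"
  shows "monomial_ideal (mpow E n)"
proof (cases n)
  case 0
  then show ?thesis by (simp add: monomial_ideal_def)
next
  case (Suc m)
  then show ?thesis by (simp add: monomial_ideal_mprod assms)
qed

lemma mpow_add_mem:
  assumes "monomial_ideal E"
  shows "a \<in> mpow E m \<Longrightarrow> b \<in> mpow E n \<Longrightarrow> (\<lambda>i. a i + b i) \<in> mpow E (m + n)"
proof (induction m arbitrary: a)
  case 0
  have "b \<le> (\<lambda>i. a i + b i)" by (simp add: le_fun_def)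
  with \<open>b \<in> mpow E n\<close> monomial_ideal_mpow[OF assms] show ?case
    unfolding monomial_ideal_def by simp
next
  case (Suc m)
  then obtain x y where x: "x \<in> E" and y: "y \<in> mpow E m" and a: "a = (\<lambda>i. x i + y i)"
    by (auto simp: mprod_def)
  have "(\<lambda>i. y i + b i) \<in> mpow E (m + n)"
    using Suc.IH[OF y Suc.prems(2)] .
  then have "(\<lambda>i. x i + (y i + b i)) \<in> mpow E (Suc m + n)"
    using mprod_mem[OF x] by simp
  then show ?case by (simp add: a add.assoc)
qed

lemma mpow_scale_mem: "g \<in> E \<Longrightarrow> (\<lambda>i. m * g i) \<in> mpow E m"
proof (induction m)
  case (Suc m)
  then have "(\<lambda>i. g i + m * g i) \<in> mpow E (Suc m)"
    using mprod_mem[of g E] by simp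
  then show ?case by simp
qed simp

lemma mprod_subset: "monomial_ideal E \<Longrightarrow> mprod E F \<subseteq> E"
  unfolding monomial_ideal_def mprod_def by (fastforce simp: le_fun_def)

lemma pure_pdeg_mem: "m_primary E \<Longrightarrow> pure i (pdeg E i) \<in> E"
  unfolding m_primary_def pdeg_def by (metis LeastI)

lemma pdeg_pos:
  assumes "m_primary E"
  shows "0 < pdeg E i"
proof (rule ccontr)
  assume "\<not> 0 < pdeg E i"
  then have "pure i (pdeg E i) = (\<lambda>_. 0)"
    by (simp add: pure_def)
  then show False
    using pure_pdeg_mem[OF assms, of i] assms by (simp add: m_primary_def)
qed

lemma mpow_pure_mem:
  assumes "pure i e \<in> E"
  shows "pure i (k * e) \<in> mpow E k"
proof -
  have "(\<lambda>j. k * pure i e j) = pure i (k * e)"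
    by (simp add: pure_def fun_eq_iff)
  then show ?thesis
    using mpow_scale_mem[OF assms, of k] by simp
qed

lemma m_primary_mpow:
  assumes "m_primary E" and "0 < k"
  shows "m_primary (mpow E k)"
proof -
  have "monomial_ideal E"
    using assms(1) by (simp add: m_primary_def)
  moreover have "mpow E k \<subseteq> E"
    using assms(2) mprod_subset[OF \<open>monomial_ideal E\<close>] by (cases k) auto
  ultimately show ?thesis
    using assms(1) monomial_ideal_mpow mpow_pure_mem[OF pure_pdeg_mem[OF assms(1)]]
    unfolding m_primary_def by blast
qed

lemma mem_gens_below:
  fixes E :: "('n::finite) expvec set"
  shows "x \<in> E \<Longrightarrow> \<exists>g\<in>gens E. g \<le> x"
proof (induction "\<Sum>i\<in>UNIV. x i" arbitrary: x rule: less_induct)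
  case less
  show ?case
  proof (cases "x \<in> gens E")
    case False
    then obtain b where b: "b \<in> E" "b \<le> x" "b \<noteq> x"
      using less.prems by (auto simp: gens_def)
    then obtain j where "b j < x j"
      by (metis le_fun_def order_less_le ext)
    with b(2) have "(\<Sum>i\<in>UNIV. b i) < (\<Sum>i\<in>UNIV. x i)"
      by (intro sum_strict_mono_ex1) (auto simp: le_fun_def)
    with less.hyps b(1) obtain g where "g \<in> gens E" "g \<le> b"
      by blast
    with b(2) show ?thesis
      using order_trans by blast
  qed auto
qed

lemma mpow_weight_ge:
  assumes "\<forall>g\<in>E. c \<le> weight d g"
  shows "b \<in> mpow E m \<Longrightarrow> real m * c \<le> weight d b"
proof (induction m arbitrary: b)
  case 0
  then show ?case by (simp add: weight_nonneg)
next
  case (Suc m)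
  then obtain x y where "x \<in> E" "y \<in> mpow E m" "b = (\<lambda>i. x i + y i)"
    by (auto simp: mprod_def)
  then show ?case
    using Suc.IH[of y] assms by (simp add: weight_add algebra_simps add_mono)
qed

lemma weight_minimal_mem_gens:
  assumes "\<forall>i. 0 < d i" and "\<forall>g\<in>E. c \<le> weight d g"
    and "a \<in> mpow E m" and "weight d a = real m * c"
  shows "a \<in> gens (mpow E m)"
  unfolding gens_def
proof (intro CollectI conjI ballI impI assms(3))
  fix b assume "b \<in> mpow E m" and "b \<le> a"
  with assms show "b = a"
    using mpow_weight_ge[OF assms(2)] weight_strict_mono[of d b a] by force
qed

lemma in_box_weight_ge:
  assumes "m_primary E" and "in_box E a \<alpha>"
  shows "real (\<Sum>i\<in>UNIV. a i) \<le> weight (pdeg E) \<alpha>"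
proof -
  have "real (\<Sum>i\<in>UNIV. a i) = (\<Sum>i\<in>UNIV. real (a i * pdeg E i) / real (pdeg E i))"
    using pdeg_pos[OF assms(1)] by simp
  also have "\<dots> \<le> weight (pdeg E) \<alpha>"
    unfolding weight_def using assms(2)
    by (intro sum_mono divide_right_mono) (simp_all only: in_box_def of_nat_le_iff of_nat_0_le_iff)
  finally show ?thesis .
qed

lemma good_weight_ge_one:
  assumes "good I" and "g \<in> I"
  shows "1 \<le> weight (pdeg I) g"
proof (rule ccontr)
  assume "\<not> 1 \<le> weight (pdeg I) g"
  then obtain l :: nat where l: "1 < real l * (1 - weight (pdeg I) g)"
    using ex_less_of_nat_mult[of "1 - weight (pdeg I) g"] by auto
  then have "1 \<le> l"
    by (cases l) auto
  have "(\<lambda>i. l * g i) \<in> mpow I l"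
    by (rule mpow_scale_mem[OF assms(2)])
  then obtain \<alpha> where \<alpha>: "\<alpha> \<in> gens (mpow I l)" "\<alpha> \<le> (\<lambda>i. l * g i)"
    using mem_gens_below by blast
  obtain a where a: "(\<Sum>i\<in>UNIV. a i) = l - 1" "in_box I a \<alpha>"
    using assms(1) \<alpha>(1) \<open>1 \<le> l\<close> unfolding good_def by blast
  have "real l - 1 \<le> weight (pdeg I) \<alpha>"
    using in_box_weight_ge[OF _ a(2)] assms(1) a(1) \<open>1 \<le> l\<close> by (simp add: good_def)
  also have "\<dots> \<le> real l * weight (pdeg I) g"
    using weight_mono[OF \<alpha>(2)] by (simp add: weight_scale)
  finally show False
    using l by (simp add: algebra_simps)
qed

lemma pdeg_mpow:
  assumes "m_primary I" and "\<forall>g\<in>I. 1 \<le> weight (pdeg I) g"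
  shows "pdeg (mpow I k) i = k * pdeg I i"
  unfolding pdeg_def[of "mpow I k"]
proof (rule Least_equality)
  show "pure i (k * pdeg I i) \<in> mpow I k"
    using mpow_pure_mem[OF pure_pdeg_mem[OF assms(1)]] .
  fix e assume "pure i e \<in> mpow I k"
  then have "real k \<le> real e / real (pdeg I i)"
    using mpow_weight_ge[OF assms(2)] weight_pure[of "pdeg I" i e] by fastforce
  then show "k * pdeg I i \<le> e"
    using pdeg_pos[OF assms(1), of i] by (simp add: field_simps flip: of_nat_mult)
qed

lemma good_gens_mpow_exceed_pdeg:
  assumes "good E" and "2 \<le> l" and "\<alpha> \<in> gens (mpow E l)"
  shows "\<exists>j. pdeg E j \<le> \<alpha> j"
proof -
  obtain a where a: "(\<Sum>i\<in>UNIV. a i) = l - 1" "in_box E a \<alpha>"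
    using assms unfolding good_def by fastforce
  moreover have "l - 1 \<noteq> 0"
    using assms(2) by simp
  ultimately obtain j where "1 \<le> a j"
    by (metis (mono_tags) less_one not_le sum.neutral)
  then have "pdeg E j \<le> a j * pdeg E j"
    by simp
  also have "\<dots> \<le> \<alpha> j"
    using a(2) by (simp add: in_box_def)
  finally show ?thesis ..
qed

lemma not_good_mpow:
  fixes I :: "('n::finite) expvec set" and i1 i2 i3 i4 :: 'n
  assumes "m_primary I" and above: "\<forall>g\<in>I. 1 \<le> weight (pdeg I) g"
    and "distinct [i1, i2, i3, i4]" and "2 \<le> k"
  shows "\<not> good (mpow I k)"
proof
  assume good: "good (mpow I k)"
  define d where "d = pdeg I"
  define J where "J = mpow I k"
  define P where "P i = pure i (d i)" for i
  define A where "A = (\<lambda>j. ((k - 1) * P i1 j + P i3 j) + ((k - 1) * P i2 j + P i4 j))"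
  have mono: "monomial_ideal I"
    using assms(1) by (simp add: m_primary_def)
  have "P i \<in> I" for i
    unfolding P_def d_def by (rule pure_pdeg_mem[OF assms(1)])
  then have "(\<lambda>j. (k - 1) * P i j + P i' j) \<in> mpow I (k - 1 + 1)" for i i'
    by (intro mpow_add_mem[OF mono] mpow_scale_mem mpow_one_mem)
  then have "(\<lambda>j. (k - 1) * P i j + P i' j) \<in> J" for i i'
    using \<open>2 \<le> k\<close> unfolding J_def by simp
  then have "A \<in> mpow J 2"
    using mpow_add_mem[OF monomial_ideal_mpow[OF mono] mpow_one_mem mpow_one_mem]
    unfolding A_def J_def one_add_one by blast
  moreover have "weight d A = real 2 * real k"
    using pdeg_pos[OF assms(1)] \<open>2 \<le> k\<close>
    by (simp add: A_def P_def d_def weight_add weight_scale weight_pure of_nat_diff)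
  moreover have "\<forall>g\<in>J. real k \<le> weight d g"
    using mpow_weight_ge[OF above] unfolding J_def d_def by fastforce
  ultimately have "A \<in> gens (mpow J 2)"
    using weight_minimal_mem_gens[of d J "real k" A 2] pdeg_pos[OF assms(1)]
    unfolding d_def by (simp add: mult.commute)
  then obtain j where "pdeg J j \<le> A j"
    using good_gens_mpow_exceed_pdeg[of J 2 A] good unfolding J_def by auto
  moreover have "A j \<le> (k - 1) * d j"
  proof -
    have "1 \<le> k - 1"
      using \<open>2 \<le> k\<close> by simp
    then have "d j \<le> (k - 1) * d j"
      by simp
    then show ?thesis
      using assms(3) by (auto simp: A_def P_def pure_def)
  qed
  moreover have "(k - 1) * d j < pdeg J j"
    using pdeg_mpow[OF assms(1) above] pdeg_pos[OF assms(1)] \<open>2 \<le> k\<close>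
    unfolding J_def d_def by simp
  ultimately show False
    by linarith
qed

lemma ex_four_distinct:
  assumes "4 \<le> card (UNIV :: 'n set)"
  obtains i1 i2 i3 i4 :: 'n where "distinct [i1, i2, i3, i4]"
proof -
  obtain S :: "'n set" where "card S = 4"
    using obtain_subset_with_card_n[OF assms] by blast
  then show ?thesis
    using that by (auto simp: card_Suc_eq numeral_eq_Suc)
qed

theorem mainTheorem14:
  fixes I :: "('n::finite) expvec set" and k :: nat
  assumes "card (UNIV :: 'n set) \<ge> 4" and "good I" and "k \<ge> 2"
  shows "bad (mpow I k)"
proof -
  have "m_primary I"
    using assms(2) by (simp add: good_def)
  moreover have "\<forall>g\<in>I. 1 \<le> weight (pdeg I) g"
    using good_weight_ge_one[OF assms(2)] by blast
  moreover obtain i1 i2 i3 i4 :: 'n where "distinct [i1, i2, i3, i4]"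
    using ex_four_distinct[OF assms(1)] .
  ultimately show ?thesis
    unfolding bad_def using m_primary_mpow[of I k] not_good_mpow[of I i1 i2 i3 i4 k] assms(3)
    by simp
qed

end
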